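(* Let $P$, $\mathcal{R}$ and the algorithm be as below, with output graph $G$. Let $q,q'\in P$ with $x(q)<x(q')$ such that the edge $qq'$ is Delaunay. If $qq'\notin E(G)$, then either (i) $h(qq')$ discretely pierces a rectangle of $\mathcal{R}$ or crosses an edge existing when $q'$ is processed, or (ii) $v(qq')$ discretely pierces a rectangle of $\mathcal{R}$. In particular, $v(qq')$ does not cross an existing edge.
   Context: $P$ is a finite point set and $\mathcal{R}$ a finite family of non-piercing axis-parallel rectangles (for any $R_1,R_2$, $R_1\setminus R_2$ connected), in general position. For $x(q)<x(q')$ the edge $qq'$ is the L-shaped curve consisting of the vertical segment $v(qq')$ from $q'$ to $(x(q'),y(q))$ and the horizontal segment $h(qq')$ from $(x(q'),y(q))$ to $q$. It is Delaunay if the interior of the rectangle with diagonal corners $q,q'$ contains no point of $P$. A set $S$ discretely pierces a rectangle $R$ if $R\setminus S$ has two components, each containing a point of $P$. An edge is valid if it discretely pierces no rectangle of $\mathcal{R}$ and crosses no edge already present. The algorithm sorts $P$ by $x$-coordinate as $p_1,\dots,p_n$ and for $i=2,\dots,n$ (processing $p_i$) adds all valid Delaunay edges $p_ip_j$ with $j<i$. *)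

theory Defs
  imports "HOL-Analysis.Analysis"
begin

type_synonym pt = "real \<times> real"

text \<open>Corner of the L-shaped edge qq' (for x(q) < x(q')): the point (x(q'), y(q)).\<close>
definition corner :: "pt \<Rightarrow> pt \<Rightarrow> pt" where
  "corner q q' = (fst q', snd q)"

definition vpart :: "pt \<Rightarrow> pt \<Rightarrow> pt set" where
  "vpart q q' = closed_segment q' (corner q q')"

definition hpart :: "pt \<Rightarrow> pt \<Rightarrow> pt set" where
  "hpart q q' = closed_segment (corner q q') q"

definition edge_curve :: "pt \<Rightarrow> pt \<Rightarrow> pt set" where
  "edge_curve q q' = vpart q q' \<union> hpart q q'"

definition delaunay :: "pt set \<Rightarrow> pt \<Rightarrow> pt \<Rightarrow> bool" where
  "delaunay P q q' \<longleftrightarrow>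
     (\<forall>z\<in>P. \<not> (min (fst q) (fst q') < fst z \<and> fst z < max (fst q) (fst q') \<and>
                 min (snd q) (snd q') < snd z \<and> snd z < max (snd q) (snd q')))"

definition dpierces :: "pt set \<Rightarrow> pt set \<Rightarrow> pt set \<Rightarrow> bool" where
  "dpierces P S R \<longleftrightarrow> card (components (R - S)) = 2 \<and> (\<forall>C\<in>components (R - S). C \<inter> P \<noteq> {})"

definition h_crosses :: "pt \<times> pt \<Rightarrow> pt \<times> pt \<Rightarrow> bool" where
  "h_crosses e f \<longleftrightarrow>
     open_segment (corner (fst e) (snd e)) (fst e) \<inter> open_segment (snd f) (corner (fst f) (snd f)) \<noteq> {}"

definition v_crosses :: "pt \<times> pt \<Rightarrow> pt \<times> pt \<Rightarrow> bool" where
  "v_crosses e f \<longleftrightarrow>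
     open_segment (snd e) (corner (fst e) (snd e)) \<inter> open_segment (corner (fst f) (snd f)) (fst f) \<noteq> {}"

definition crosses :: "pt \<times> pt \<Rightarrow> pt \<times> pt \<Rightarrow> bool" where
  "crosses e f \<longleftrightarrow> h_crosses e f \<or> v_crosses e f"

definition valid :: "pt set \<Rightarrow> pt set set \<Rightarrow> (pt \<times> pt) set \<Rightarrow> pt \<Rightarrow> pt \<Rightarrow> bool" where
  "valid P Rs E q q' \<longleftrightarrow>
     (\<forall>R\<in>Rs. \<not> dpierces P (edge_curve q q') R) \<and> (\<forall>f\<in>E. \<not> crosses (q, q') f)"

text \<open>Edge set after processing p_1, ..., p_i (points indexed 1..n in increasing x-order).
  Edges are stored as pairs (left endpoint, right endpoint).\<close>
fun alg_edges :: "pt set \<Rightarrow> pt set set \<Rightarrow> (nat \<Rightarrow> pt) \<Rightarrow> nat \<Rightarrow> (pt \<times> pt) set" where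
  "alg_edges P Rs p 0 = {}"
| "alg_edges P Rs p (Suc i) = alg_edges P Rs p i \<union>
     {(p j, p (Suc i)) | j. 1 \<le> j \<and> j < Suc i \<and> delaunay P (p j) (p (Suc i)) \<and>
                            valid P Rs (alg_edges P Rs p i) (p j) (p (Suc i))}"

definition is_rect :: "pt set \<Rightarrow> bool" where
  "is_rect R \<longleftrightarrow> (\<exists>a b. R = cbox a b \<and> fst a < fst b \<and> snd a < snd b)"

definition non_piercing :: "pt set set \<Rightarrow> bool" where
  "non_piercing Rs \<longleftrightarrow> (\<forall>R1\<in>Rs. \<forall>R2\<in>Rs. connected (R1 - R2))"

definition gen_pos :: "pt set \<Rightarrow> pt set set \<Rightarrow> bool" where
  "gen_pos P Rs \<longleftrightarrow> inj_on fst P \<and> inj_on snd P \<and>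
     (\<forall>R\<in>Rs. \<forall>a b. R = cbox a b \<longrightarrow>
        {fst a, fst b} \<inter> fst ` P = {} \<and> {snd a, snd b} \<inter> snd ` P = {} \<and>
        (\<forall>R'\<in>Rs. \<forall>a' b'. R' \<noteq> R \<and> R' = cbox a' b' \<longrightarrow>
           {fst a, fst b} \<inter> {fst a', fst b'} = {} \<and> {snd a, snd b} \<inter> {snd a', snd b'} = {}))"

end

theory Submission
  imports Defs
begin

text \<open>If the L-shaped curve of a Delaunay edge \<open>qq'\<close> discretely pierces a rectangle \<open>R\<close>, then
  so does one of its two legs. Either one leg misses \<open>R\<close>, or the corner lies inside \<open>R\<close>; in the
  latter case removing the whole bounding box of \<open>qq'\<close> from \<open>R\<close> leaves a connected set which, by
  the Delaunay property and general position, still contains every point of \<open>P\<close> in \<open>R\<close> off the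
  curve, so the curve does not pierce \<open>R\<close> after all. The vertical leg cannot cross an edge present
  when \<open>q'\<close> is processed, since all such edges lie strictly to the left of \<open>q'\<close>.\<close>

lemma mem_cbox_pt_iff:
  "(z::pt) \<in> cbox a b \<longleftrightarrow> fst a \<le> fst z \<and> fst z \<le> fst b \<and> snd a \<le> snd z \<and> snd z \<le> snd b"
  by (cases z; cases a; cases b) (auto simp: cbox_Pair_eq)

lemma vpart_eq: "vpart q q' = {fst q'} \<times> closed_segment (snd q') (snd q)"
  unfolding vpart_def corner_def by (simp add: closed_segment_same_fst)

lemma hpart_eq: "hpart q q' = closed_segment (fst q') (fst q) \<times> {snd q}"
  unfolding hpart_def corner_def by (simp add: closed_segment_same_snd)

lemma endpoints_in_edge_curve: "q \<in> edge_curve q q'" "q' \<in> edge_curve q q'"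
  unfolding edge_curve_def hpart_def vpart_def by auto

lemma edge_curve_subset_cbox:
  assumes "fst q \<le> fst q'"
  shows "edge_curve q q' \<subseteq> cbox (fst q, min (snd q) (snd q')) (fst q', max (snd q) (snd q'))"
  using assms unfolding edge_curve_def vpart_eq hpart_eq
  by (auto simp: mem_cbox_pt_iff closed_segment_eq_real_ivl split: if_splits)

lemma not_dpierces_if_connected_cover:
  assumes "connected S" "S \<subseteq> R - Y" "P \<inter> (R - Y) \<subseteq> S"
  shows "\<not> dpierces P Y R"
proof
  assume "dpierces P Y R"
  then obtain C1 C2 where C: "components (R - Y) = {C1, C2}" "C1 \<noteq> C2"
    and "C1 \<inter> P \<noteq> {}" "C2 \<inter> P \<noteq> {}"
    unfolding dpierces_def card_2_iff by auto
  then have "C1 \<inter> S \<noteq> {}" "C2 \<inter> S \<noteq> {}"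
    using assms(3) in_components_subset[of _ "R - Y"] by blast+
  then have "S \<subseteq> C1" "S \<subseteq> C2"
    using components_maximal[OF _ assms(1,2)] C(1) by blast+
  then have "C1 \<inter> C2 \<noteq> {}"
    using \<open>C1 \<inter> S \<noteq> {}\<close> by blast
  then show False
    using components_nonoverlap[of C1 "R - Y" C2] C by auto
qed

text \<open>Only the right side and one horizontal side of the removed box need to meet the interior
  of the rectangle: the bands right of, below, above and left of the box then overlap in a chain.\<close>
lemma connected_rect_minus_cbox:
  fixes a1 a2 b1 b2 l1 l2 h1 h2 :: real
  assumes "a1 < h1" "h1 < b1" "a2 < l2 \<and> l2 < b2 \<or> a2 < h2 \<and> h2 < b2" "a2 < b2"
  shows "connected (cbox (a1, a2) (b1, b2) - cbox (l1, l2) (h1, h2))"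
proof -
  define Le where "Le = ({a1..b1} \<inter> {..<l1}) \<times> {a2..b2}"
  define Ri where "Ri = ({a1..b1} \<inter> {h1<..}) \<times> {a2..b2}"
  define Bo where "Bo = {a1..b1} \<times> ({a2..b2} \<inter> {..<l2})"
  define To where "To = {a1..b1} \<times> ({a2..b2} \<inter> {h2<..})"
  have connected_bands: "connected Le" "connected Ri" "connected Bo" "connected To"
    unfolding Le_def Ri_def Bo_def To_def
    by (intro convex_connected convex_Times convex_Int convex_real_interval; simp)+
  have "connected (Ri \<union> Bo)"
  proof (cases "Bo = {}")
    case False
    then have "(b1, a2) \<in> Ri \<inter> Bo" using assms unfolding Ri_def Bo_def by auto
    then show ?thesis using connected_bands connected_Un by blast
  qed (use connected_bands in simp)
  moreover have "connected (Ri \<union> Bo \<union> To)"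
  proof (cases "To = {}")
    case False
    then have "(b1, b2) \<in> (Ri \<union> Bo) \<inter> To" using assms unfolding Ri_def To_def by auto
    then show ?thesis using calculation connected_bands connected_Un by blast
  qed (use calculation in simp)
  moreover have "connected (Ri \<union> Bo \<union> To \<union> Le)"
  proof (cases "Le = {}")
    case False
    then have "(a1, a2) \<in> (Ri \<union> Bo \<union> To) \<inter> Le \<or> (a1, b2) \<in> (Ri \<union> Bo \<union> To) \<inter> Le"
      using assms unfolding Le_def Bo_def To_def by auto
    then show ?thesis using calculation connected_bands connected_Un by blast
  qed (use calculation in simp)
  moreover have "cbox (a1, a2) (b1, b2) - cbox (l1, l2) (h1, h2) = Ri \<union> Bo \<union> To \<union> Le"
    unfolding Le_def Ri_def Bo_def To_def by (auto simp: mem_cbox_pt_iff)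
  ultimately show ?thesis by simp
qed

lemma delaunay_other_points_outside_cbox:
  assumes "inj_on fst P" "inj_on snd P" "q \<in> P" "q' \<in> P" "fst q < fst q'" "delaunay P q q'"
    and "z \<in> P" "z \<noteq> q" "z \<noteq> q'"
  shows "z \<notin> cbox (fst q, min (snd q) (snd q')) (fst q', max (snd q) (snd q'))"
proof
  assume "z \<in> cbox (fst q, min (snd q) (snd q')) (fst q', max (snd q) (snd q'))"
  moreover have "fst z \<noteq> fst q" "fst z \<noteq> fst q'" "snd z \<noteq> snd q" "snd z \<noteq> snd q'"
    using assms(1-4,7-9) by (auto dest: inj_onD)
  ultimately have "min (fst q) (fst q') < fst z \<and> fst z < max (fst q) (fst q') \<and>
      min (snd q) (snd q') < snd z \<and> snd z < max (snd q) (snd q')"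
    using assms(5) by (auto simp: mem_cbox_pt_iff min_def max_def)
  then show False
    using assms(6,7) unfolding delaunay_def by blast
qed

lemma not_dpierces_edge_curve_corner_inside:
  assumes "inj_on fst P" "inj_on snd P" "q \<in> P" "q' \<in> P" "fst q < fst q'" "delaunay P q q'"
    and "fst a < fst q'" "fst q' < fst b" "snd a < snd q" "snd q < snd b"
  shows "\<not> dpierces P (edge_curve q q') (cbox a b)"
proof -
  define K where "K = cbox (fst q, min (snd q) (snd q')) (fst q', max (snd q) (snd q'))"
  have "connected (cbox (fst a, snd a) (fst b, snd b) - K)"
    unfolding K_def using assms(7-10)
    by (intro connected_rect_minus_cbox) (auto simp: min_def max_def)
  then have "connected (cbox a b - K)"
    by simp
  moreover have "edge_curve q q' \<subseteq> K"
    using edge_curve_subset_cbox assms(5) unfolding K_def by simp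
  then have "cbox a b - K \<subseteq> cbox a b - edge_curve q q'"
    by blast
  moreover have "z \<notin> K" if "z \<in> P" "z \<notin> edge_curve q q'" for z
  proof -
    have "z \<noteq> q" "z \<noteq> q'"
      using that(2) endpoints_in_edge_curve by blast+
    then show ?thesis
      using delaunay_other_points_outside_cbox[OF assms(1-6) that(1)] unfolding K_def by simp
  qed
  then have "P \<inter> (cbox a b - edge_curve q q') \<subseteq> cbox a b - K"
    by blast
  ultimately show ?thesis
    by (rule not_dpierces_if_connected_cover)
qed

lemma gen_pos_rect_sides:
  assumes "gen_pos P Rs" "cbox a b \<in> Rs" "z \<in> P"
  shows "fst z \<noteq> fst a" "fst z \<noteq> fst b" "snd z \<noteq> snd a" "snd z \<noteq> snd b"
proof -
  have "fst z \<in> fst ` P" "snd z \<in> snd ` P"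
    using assms(3) by auto
  moreover have "{fst a, fst b} \<inter> fst ` P = {}" "{snd a, snd b} \<inter> snd ` P = {}"
    using assms(1)[unfolded gen_pos_def, THEN conjunct2, THEN conjunct2, rule_format, OF assms(2) refl]
    by auto
  ultimately show "fst z \<noteq> fst a" "fst z \<noteq> fst b" "snd z \<noteq> snd a" "snd z \<noteq> snd b"
    by blast+
qed

lemma dpierces_edge_curve_imp_dpierces_part:
  assumes "gen_pos P Rs" "R \<in> Rs" "is_rect R"
    and "q \<in> P" "q' \<in> P" "fst q < fst q'" "delaunay P q q'"
    and "dpierces P (edge_curve q q') R"
  shows "dpierces P (hpart q q') R \<or> dpierces P (vpart q q') R"
proof -
  obtain a b where R: "R = cbox a b"
    using assms(3) unfolding is_rect_def by blast
  have "cbox a b \<in> Rs"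
    using assms(2) R by simp
  then have sides: "fst q' \<noteq> fst a" "fst q' \<noteq> fst b" "snd q \<noteq> snd a" "snd q \<noteq> snd b"
    using gen_pos_rect_sides[OF assms(1)] assms(4,5) by blast+
  consider "fst q' < fst a \<or> fst b < fst q'" | "snd q < snd a \<or> snd b < snd q"
    | "fst a < fst q'" "fst q' < fst b" "snd a < snd q" "snd q < snd b"
    using sides by linarith
  then show ?thesis
  proof cases
    case 1
    then have "R - edge_curve q q' = R - hpart q q'"
      unfolding R edge_curve_def vpart_eq by (auto simp: mem_cbox_pt_iff)
    then show ?thesis using assms(8) unfolding dpierces_def by simp
  next
    case 2
    then have "R - edge_curve q q' = R - vpart q q'"
      unfolding R edge_curve_def hpart_eq by (auto simp: mem_cbox_pt_iff)
    then show ?thesis using assms(8) unfolding dpierces_def by simp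
  next
    case 3
    have "inj_on fst P" "inj_on snd P"
      using assms(1) unfolding gen_pos_def by simp_all
    then have "\<not> dpierces P (edge_curve q q') R"
      using not_dpierces_edge_curve_corner_inside assms(4-7) 3 R by blast
    then show ?thesis using assms(8) by blast
  qed
qed

lemma not_v_crosses_edge_left_of:
  assumes "fst a < fst q'" "fst b < fst q'"
  shows "\<not> v_crosses (q, q') (a, b)"
proof
  assume "v_crosses (q, q') (a, b)"
  then obtain z where "z \<in> vpart q q'" "z \<in> hpart a b"
    unfolding v_crosses_def vpart_def hpart_def by (auto dest: open_closed_segment)
  then have "fst z = fst q'" "fst z \<in> closed_segment (fst b) (fst a)"
    unfolding vpart_eq hpart_eq by auto
  then show False
    using assms by (auto simp: closed_segment_eq_real_ivl split: if_splits)
qed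

lemma alg_edges_mono: "i \<le> m \<Longrightarrow> alg_edges P Rs p i \<subseteq> alg_edges P Rs p m"
  by (induction m) (auto simp: le_Suc_eq)

lemma alg_edges_indices:
  "f \<in> alg_edges P Rs p i \<Longrightarrow> \<exists>j m. f = (p j, p m) \<and> 1 \<le> j \<and> j < m \<and> m \<le> i"
  by (induction i) (auto intro: le_SucI)

lemma alg_edges_addI:
  assumes "1 \<le> j" "j < k" "delaunay P (p j) (p k)"
    and "valid P Rs (alg_edges P Rs p (k - 1)) (p j) (p k)"
  shows "(p j, p k) \<in> alg_edges P Rs p k"
proof -
  obtain i where "k = Suc i" using assms(2) less_imp_Suc_add by blast
  then show ?thesis using assms by auto
qed

lemma alg_edges_left_of:
  assumes "strict_mono_on {1..n} (\<lambda>i. fst (p i))" "k \<in> {1..n}"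
    and "(a, b) \<in> alg_edges P Rs p (k - 1)"
  shows "fst a < fst (p k)" "fst b < fst (p k)"
proof -
  obtain i m where ab: "a = p i" "b = p m" and "1 \<le> i" "i < m" "m \<le> k - 1"
    using alg_edges_indices[OF assms(3)] by blast
  then have "i \<in> {1..n}" "m \<in> {1..n}" "i < k" "m < k"
    using assms(2) by auto
  then show "fst a < fst (p k)" "fst b < fst (p k)"
    unfolding ab using strict_mono_onD[OF assms(1) _ assms(2)] by blast+
qed

theorem proposition6:
  fixes P :: "pt set" and Rs :: "pt set set" and p :: "nat \<Rightarrow> pt" and n k :: nat
    and q q' :: pt
  assumes "finite P" and "finite Rs"
    and "\<forall>R\<in>Rs. is_rect R" and "non_piercing Rs" and "gen_pos P Rs"
    and "n = card P" and "p ` {1..n} = P"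
    and "\<forall>i\<in>{1..n}. \<forall>j\<in>{1..n}. i < j \<longrightarrow> fst (p i) < fst (p j)"
    and "q \<in> P" and "q' \<in> P" and "fst q < fst q'"
    and "delaunay P q q'"
    and "k \<in> {1..n}" and "p k = q'"
    and "(q, q') \<notin> alg_edges P Rs p n"
  shows "(((\<exists>R\<in>Rs. dpierces P (hpart q q') R) \<or> (\<exists>f\<in>alg_edges P Rs p (k - 1). h_crosses (q, q') f))
           \<or> (\<exists>R\<in>Rs. dpierces P (vpart q q') R))
         \<and> (\<forall>f\<in>alg_edges P Rs p (k - 1). \<not> v_crosses (q, q') f)"
proof -
  define E where "E = alg_edges P Rs p (k - 1)"
  have sorted: "strict_mono_on {1..n} (\<lambda>i. fst (p i))"
    using assms(8) by (intro strict_mono_onI) auto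
  obtain j where j: "j \<in> {1..n}" "p j = q"
    using assms(7,9) by blast
  then have "j < k"
    using strict_mono_on_less[OF sorted j(1) assms(13)] assms(11,14) by simp
  then have "\<not> valid P Rs E q q'"
    using alg_edges_addI[of j k P p Rs] alg_edges_mono[of k n P Rs p] assms(12-15) j
    unfolding E_def by auto
  moreover have "\<forall>f\<in>E. \<not> v_crosses (q, q') f"
  proof
    fix f assume "f \<in> E"
    moreover obtain a b where "f = (a, b)"
      by (cases f)
    ultimately show "\<not> v_crosses (q, q') f"
      using alg_edges_left_of[OF sorted assms(13)] not_v_crosses_edge_left_of assms(14)
      unfolding E_def by blast
  qed
  ultimately show ?thesis
    using dpierces_edge_curve_imp_dpierces_part[OF assms(5) _ _ assms(9-12)] assms(3)
    unfolding valid_def crosses_def E_def by blast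
qed

end
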